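(* Let $\mathcal{H}$ be a hypothesis set of functions $h\colon \mathcal{X}\times(\mathcal{Y}\cup\{n+1\})\to\mathbb{R}$ that is symmetric and complete, let $c\in(0,1)$ and $\mu\ge 0$. Then for any hypothesis $h\in\mathcal{H}$ and any distribution $\mathcal{D}$ over $\mathcal{X}\times\mathcal{Y}$, \[ \mathcal{E}_{\mathsf{L}_{\mathrm{abs}}}(h)-\mathcal{E}^*_{\mathsf{L}_{\mathrm{abs}}}(\mathcal{H})+\mathcal{M}_{\mathsf{L}_{\mathrm{abs}}}(\mathcal{H})\le \Gamma_\mu\Big(\mathcal{E}_{\mathsf{L}_\mu}(h)-\mathcal{E}^*_{\mathsf{L}_\mu}(\mathcal{H})+\mathcal{M}_{\mathsf{L}_\mu}(\mathcal{H})\Big), \] where \[ \Gamma_\mu(t)=\begin{cases}\sqrt{(2-c)\,2^{\mu}(2-\mu)\,t} & \mu\in[0,1),\\ \sqrt{2(2-c)(n+1)^{\mu-1}\,t} & \mu\in[1,2),\\ (\mu-1)(n+1)^{\mu-1}\,t & \mu\in[2,+\infty).\end{cases} \]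
   Context: Let $\mathcal{X}$ be an input space and $\mathcal{Y}=\{1,\dots,n\}$ with $n\ge 2$. A distribution $\mathcal{D}$ on $\mathcal{X}\times\mathcal{Y}$ has conditional probabilities $p(x,y)=\mathcal{D}(Y=y\mid X=x)$. A hypothesis set $\mathcal{H}$ consists of functions $h\colon\mathcal{X}\times(\mathcal{Y}\cup\{n+1\})\to\mathbb{R}$, where $n+1$ is an extra "abstention" label. For $h\in\mathcal{H}$ and $x\in\mathcal{X}$, the predicted label $\mathsf{h}(x)$ is $n+1$ if $h(x,n+1)\ge\max_{y\in\mathcal{Y}}h(x,y)$; otherwise $\mathsf{h}(x)=\operatorname{argmax}_{y\in\mathcal{Y}}h(x,y)$, with ties broken by an arbitrary but fixed deterministic rule. For a constant cost $c\in(0,1)$, the score-based abstention loss is $\mathsf{L}_{\mathrm{abs}}(h,x,y)=\mathbb{1}_{\mathsf{h}(x)\neq y}\mathbb{1}_{\mathsf{h}(x)\neq n+1}+c\,\mathbb{1}_{\mathsf{h}(x)=n+1}$. For $\mu\ge0$, define $\ell_\mu(h,x,y)=\frac{1}{1-\mu}\Big(\big[\sum_{y'\in\mathcal{Y}\cup\{n+1\}}e^{h(x,y')-h(x,y)}\big]^{1-\mu}-1\Big)$ if $\mu\neq1$ and $\ell_1(h,x,y)=\log\big(\sum_{y'\in\mathcal{Y}\cup\{n+1\}}e^{h(x,y')-h(x,y)}\big)$, for $y\in\mathcal{Y}\cup\{n+1\}$; and the cross-entropy score-based surrogate $\mathsf{L}_\mu(h,x,y)=\ell_\mu(h,x,y)+(1-c)\,\ell_\mu(h,x,n+1)$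 for $(x,y)\in\mathcal{X}\times\mathcal{Y}$. For a loss $\mathsf{L}$: $\mathcal{E}_{\mathsf{L}}(h)=\mathbb{E}_{(x,y)\sim\mathcal{D}}[\mathsf{L}(h,x,y)]$, $\mathcal{E}^*_{\mathsf{L}}(\mathcal{H})=\inf_{h\in\mathcal{H}}\mathcal{E}_{\mathsf{L}}(h)$, and the minimizability gap $\mathcal{M}_{\mathsf{L}}(\mathcal{H})=\mathcal{E}^*_{\mathsf{L}}(\mathcal{H})-\mathbb{E}_x\big[\inf_{h\in\mathcal{H}}\mathbb{E}_y[\mathsf{L}(h,X,y)\mid X=x]\big]$. $\mathcal{H}$ is symmetric if there is a family $\mathcal{F}$ of functions $\mathcal{X}\to\mathbb{R}$ such that for every $x$, $\{[h(x,1),\dots,h(x,n+1)]:h\in\mathcal{H}\}=\{[f_1(x),\dots,f_{n+1}(x)]:f_1,\dots,f_{n+1}\in\mathcal{F}\}$. $\mathcal{H}$ is complete if $\{h(x,y):h\in\mathcal{H}\}=\mathbb{R}$ for every $(x,y)\in\mathcal{X}\times(\mathcal{Y}\cup\{n+1\})$. *)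

theory Defs
  imports "HOL-Probability.Probability"
begin

text \<open>Labels: Y = {1..n}, abstention label n+1. A hypothesis is a score function
  h :: 'x \<Rightarrow> nat \<Rightarrow> real (only its values at labels 1..n+1 matter).
  The tie-breaking rule is a fixed deterministic choice function tb.\<close>

definition pred_label :: "nat \<Rightarrow> ('x \<Rightarrow> nat set \<Rightarrow> nat) \<Rightarrow> ('x \<Rightarrow> nat \<Rightarrow> real) \<Rightarrow> 'x \<Rightarrow> nat" where
  "pred_label n tb h x =
     (if h x (n + 1) \<ge> Max ((\<lambda>y. h x y) ` {1..n}) then n + 1
      else tb x {y \<in> {1..n}. h x y = Max ((\<lambda>y. h x y) ` {1..n})})"

definition L_abs :: "nat \<Rightarrow> ('x \<Rightarrow> nat set \<Rightarrow> nat) \<Rightarrow> real \<Rightarrow> ('x \<Rightarrow> nat \<Rightarrow> real) \<Rightarrow> 'x \<Rightarrow> nat \<Rightarrow> real" where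
  "L_abs n tb c h x y =
     (if pred_label n tb h x \<noteq> y \<and> pred_label n tb h x \<noteq> n + 1 then 1 else 0)
     + c * (if pred_label n tb h x = n + 1 then 1 else 0)"

definition ell :: "nat \<Rightarrow> real \<Rightarrow> ('x \<Rightarrow> nat \<Rightarrow> real) \<Rightarrow> 'x \<Rightarrow> nat \<Rightarrow> real" where
  "ell n \<mu> h x y =
     (let s = (\<Sum>y'\<in>{1..n+1}. exp (h x y' - h x y))
      in if \<mu> = 1 then ln s else (s powr (1 - \<mu>) - 1) / (1 - \<mu>))"

definition L_mu :: "nat \<Rightarrow> real \<Rightarrow> real \<Rightarrow> ('x \<Rightarrow> nat \<Rightarrow> real) \<Rightarrow> 'x \<Rightarrow> nat \<Rightarrow> real" where
  "L_mu n c \<mu> h x y = ell n \<mu> h x y + (1 - c) * ell n \<mu> h x (n + 1)"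

text \<open>The distribution D on X \<times> Y is given by its marginal Mx on X and its
  conditional probabilities p x y = D(Y = y | X = x).\<close>

definition cond_loss ::
  "nat \<Rightarrow> ('x \<Rightarrow> nat \<Rightarrow> real) \<Rightarrow> (('x \<Rightarrow> nat \<Rightarrow> real) \<Rightarrow> 'x \<Rightarrow> nat \<Rightarrow> real)
    \<Rightarrow> ('x \<Rightarrow> nat \<Rightarrow> real) \<Rightarrow> 'x \<Rightarrow> real" where
  "cond_loss n p L h x = (\<Sum>y\<in>{1..n}. p x y * L h x y)"

definition exp_loss ::
  "nat \<Rightarrow> 'x measure \<Rightarrow> ('x \<Rightarrow> nat \<Rightarrow> real) \<Rightarrow> (('x \<Rightarrow> nat \<Rightarrow> real) \<Rightarrow> 'x \<Rightarrow> nat \<Rightarrow> real)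
    \<Rightarrow> ('x \<Rightarrow> nat \<Rightarrow> real) \<Rightarrow> ereal" where
  "exp_loss n Mx p L h = enn2ereal (\<integral>\<^sup>+ x. ennreal (cond_loss n p L h x) \<partial>Mx)"

definition best_loss ::
  "nat \<Rightarrow> 'x measure \<Rightarrow> ('x \<Rightarrow> nat \<Rightarrow> real) \<Rightarrow> (('x \<Rightarrow> nat \<Rightarrow> real) \<Rightarrow> 'x \<Rightarrow> nat \<Rightarrow> real)
    \<Rightarrow> ('x \<Rightarrow> nat \<Rightarrow> real) set \<Rightarrow> ereal" where
  "best_loss n Mx p L H = (INF h\<in>H. exp_loss n Mx p L h)"

definition min_gap ::
  "nat \<Rightarrow> 'x measure \<Rightarrow> ('x \<Rightarrow> nat \<Rightarrow> real) \<Rightarrow> (('x \<Rightarrow> nat \<Rightarrow> real) \<Rightarrow> 'x \<Rightarrow> nat \<Rightarrow> real)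
    \<Rightarrow> ('x \<Rightarrow> nat \<Rightarrow> real) set \<Rightarrow> ereal" where
  "min_gap n Mx p L H = best_loss n Mx p L H
     - enn2ereal (\<integral>\<^sup>+ x. ennreal (INF h\<in>H. cond_loss n p L h x) \<partial>Mx)"

definition symmetric_hyp :: "nat \<Rightarrow> ('x \<Rightarrow> nat \<Rightarrow> real) set \<Rightarrow> bool" where
  "symmetric_hyp n H \<longleftrightarrow> (\<exists>F :: ('x \<Rightarrow> real) set. \<forall>x.
     {(\<lambda>y\<in>{1..n+1}. h x y) | h. h \<in> H}
     = {(\<lambda>y\<in>{1..n+1}. f y x) | f. \<forall>y\<in>{1..n+1}. f y \<in> F})"

definition complete_hyp :: "nat \<Rightarrow> ('x \<Rightarrow> nat \<Rightarrow> real) set \<Rightarrow> bool" where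
  "complete_hyp n H \<longleftrightarrow> (\<forall>x. \<forall>y\<in>{1..n+1}. {h x y | h. h \<in> H} = UNIV)"

definition Gamma_mu :: "nat \<Rightarrow> real \<Rightarrow> real \<Rightarrow> real \<Rightarrow> real" where
  "Gamma_mu n c \<mu> t =
     (if \<mu> < 1 then sqrt ((2 - c) * 2 powr \<mu> * (2 - \<mu>) * t)
      else if \<mu> < 2 then sqrt (2 * (2 - c) * (real n + 1) powr (\<mu> - 1) * t)
      else (\<mu> - 1) * (real n + 1) powr (\<mu> - 1) * t)"

end

(*
  Fix x and put W y = p(x, y) for labels y \<le> n and W (n + 1) = 1 - c. Both conditional
  losses are linear in W: abstention costs 1 - W at the predicted label, and the surrogate
  is - \<Sum> W y * gen_ln \<mu> (q y), where q is the softmax of the scores and gen_ln \<mu> is the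
  Tsallis logarithm of index 2 - \<mu>. The abstention regret is W a - W b, with a maximizing W
  and b maximizing q. Since symmetry and completeness make every score vector realizable,
  the surrogate regret dominates the gain from any redistribution of q between a and b
  alone. For \<mu> < 2 the best such move, bounded below by a Pinsker-type inequality for
  gen_ln, controls (W a - W b)\<^sup>2; for \<mu> \<ge> 2 moving all of q b to a controls W a - W b
  linearly. The pointwise bound integrates by Jensen's inequality, \<Gamma>_\<mu> being concave.
*)

theory Submission
  imports Defs
begin

section \<open>The generalized logarithm\<close>

definition gen_ln :: "real \<Rightarrow> real \<Rightarrow> real" where
  "gen_ln \<mu> x = (if \<mu> = 1 then ln x else (x powr (\<mu> - 1) - 1) / (\<mu> - 1))"

lemma gen_ln_one [simp]: "gen_ln \<mu> 1 = 0"
  by (simp add: gen_ln_def)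

lemma has_real_derivative_gen_ln:
  assumes "0 < x"
  shows "(gen_ln \<mu> has_real_derivative x powr (\<mu> - 2)) (at x)"
proof (cases "\<mu> = 1")
  case True
  have "(ln has_real_derivative inverse x) (at x)" using assms by (rule DERIV_ln)
  then show ?thesis using True assms by (simp add: gen_ln_def[abs_def] powr_minus)
next
  case False
  have "((\<lambda>z. (z powr (\<mu> - 1) - 1) / (\<mu> - 1)) has_real_derivative
          (\<mu> - 1) * x powr (\<mu> - 1 - 1) / (\<mu> - 1)) (at x)"
    using assms by (auto intro!: derivative_eq_intros)
  then show ?thesis using False by (simp add: gen_ln_def[abs_def])
qed

declare has_real_derivative_gen_ln[THEN DERIV_chain2, derivative_intros]

lemma isCont_gen_ln: "0 < x \<Longrightarrow> isCont (gen_ln \<mu>) x"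
  using DERIV_isCont has_real_derivative_gen_ln by blast

lemma gen_ln_mono:
  assumes "0 < x" "x \<le> y"
  shows "gen_ln \<mu> x \<le> gen_ln \<mu> y"
proof (rule DERIV_nonneg_imp_nondecreasing[OF assms(2)])
  fix z assume "x \<le> z"
  then have "(gen_ln \<mu> has_real_derivative z powr (\<mu> - 2)) (at z)"
    using assms by (intro has_real_derivative_gen_ln) simp
  then show "\<exists>d. (gen_ln \<mu> has_real_derivative d) (at z) \<and> 0 \<le> d" by auto
qed

lemma gen_ln_mult:
  assumes "0 < v" "0 < z"
  shows "gen_ln \<mu> (v * z) = gen_ln \<mu> v + v powr (\<mu> - 1) * gen_ln \<mu> z"
proof (cases "\<mu> = 1")
  case False
  have "(v * z) powr (\<mu> - 1) = v powr (\<mu> - 1) * z powr (\<mu> - 1)"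
    using assms by (simp add: powr_mult)
  then show ?thesis using False by (simp add: gen_ln_def diff_divide_distrib right_diff_distrib)
qed (use assms in \<open>simp add: gen_ln_def ln_mult\<close>)

lemma ln_le_gen_ln:
  assumes "1 \<le> \<mu>" "0 < z"
  shows "ln z \<le> gen_ln \<mu> z"
proof (cases "\<mu> = 1")
  case False
  have "1 + (\<mu> - 1) * ln z \<le> exp ((\<mu> - 1) * ln z)" by (rule exp_ge_add_one_self)
  also have "\<dots> = z powr (\<mu> - 1)" using assms by (simp add: powr_def)
  finally have "(\<mu> - 1) * ln z \<le> z powr (\<mu> - 1) - 1" by simp
  then show ?thesis using False assms by (simp add: gen_ln_def pos_le_divide_eq mult.commute)
qed (simp add: gen_ln_def)

text \<open>Concavity: for \<open>\<mu> \<le> 2\<close> the derivative \<open>x powr (\<mu> - 2)\<close> is non-increasing.\<close>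
lemma gen_ln_increment_antimono:
  assumes "\<mu> \<le> 2" "0 < u" "u \<le> v" "0 \<le> t"
  shows "gen_ln \<mu> (v + t) - gen_ln \<mu> v \<le> gen_ln \<mu> (u + t) - gen_ln \<mu> u"
proof -
  have "\<exists>d. ((\<lambda>x. gen_ln \<mu> (x + t) - gen_ln \<mu> x) has_real_derivative d) (at z) \<and> d \<le> 0"
    if "u \<le> z" "z \<le> v" for z
  proof -
    have "((\<lambda>x. gen_ln \<mu> (x + t) - gen_ln \<mu> x) has_real_derivative
            (z + t) powr (\<mu> - 2) * (1 + 0) - z powr (\<mu> - 2)) (at z)"
      using that assms by (auto intro!: derivative_eq_intros)
    moreover have "(z + t) powr (\<mu> - 2) \<le> z powr (\<mu> - 2)"
      using that assms by (intro powr_mono2') auto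
    ultimately show ?thesis by auto
  qed
  then show ?thesis using DERIV_nonpos_imp_nonincreasing[OF assms(3)] by blast
qed

lemma two_le_powr_add_powr:
  fixes t a :: real
  assumes "0 \<le> t" "t < 1" "0 \<le> a"
  shows "2 \<le> (1 + t) powr (- a) + (1 - t) powr (- a)"
proof -
  define X where "X = (1 + t) powr (- a)"
  define Y where "Y = (1 - t) powr (- a)"
  have "t\<^sup>2 < 1" using assms by (simp add: power_less_one_iff)
  then have "1 powr (- a) \<le> (1 - t\<^sup>2) powr (- a)"
    using assms by (intro powr_mono2') auto
  also have "(1 - t\<^sup>2) powr (- a) = X * Y"
    using assms by (simp add: X_def Y_def powr_mult[symmetric] power2_eq_square algebra_simps)
  finally have "1 \<le> X * Y" by simp
  moreover have "0 \<le> (X - Y)\<^sup>2" "0 < X" "0 < Y" using assms by (auto simp: X_def Y_def)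
  ultimately have "2\<^sup>2 \<le> (X + Y)\<^sup>2" by (simp add: power2_eq_square algebra_simps)
  then show ?thesis unfolding X_def Y_def by (rule power2_le_imp_le) (simp add: X_def Y_def)
qed

text \<open>For \<open>\<mu> = 1\<close> this is Pinsker's inequality
  \<open>t\<^sup>2 \<le> (1 + t) ln (1 + t) + (1 - t) ln (1 - t)\<close>. Both sides vanish to first order
  at \<open>t = 0\<close>, and the second derivative of their difference is nonnegative by
  \<open>two_le_powr_add_powr\<close>.\<close>
lemma pinsker_gen_ln:
  fixes \<mu> t :: real
  assumes \<mu>: "0 \<le> \<mu>" "\<mu> \<le> 1" and t: "0 \<le> t" "t < 1" "(2 - \<mu>) * t \<le> 1"
  shows "(2 - \<mu>) * t\<^sup>2
           \<le> (1 + (2 - \<mu>) * t) * gen_ln \<mu> (1 + t) + (1 - (2 - \<mu>) * t) * gen_ln \<mu> (1 - t)"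
proof -
  define r where "r = 2 - \<mu>"
  have r: "1 \<le> r" "r \<le> 2" using \<mu> by (auto simp: r_def)
  define f where "f x = (1 + r * x) * gen_ln \<mu> (1 + x) + (1 - r * x) * gen_ln \<mu> (1 - x) - r * x\<^sup>2" for x
  define f' where "f' x = r * gen_ln \<mu> (1 + x) + (1 + r * x) * (1 + x) powr (\<mu> - 2)
      - r * gen_ln \<mu> (1 - x) - (1 - r * x) * (1 - x) powr (\<mu> - 2) - 2 * r * x" for x
  define f'' where "f'' x = 2 * r * (1 + x) powr (\<mu> - 2) + (\<mu> - 2) * (1 + r * x) * (1 + x) powr (\<mu> - 3)
      + 2 * r * (1 - x) powr (\<mu> - 2) + (\<mu> - 2) * (1 - r * x) * (1 - x) powr (\<mu> - 3) - 2 * r" for x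
  have df: "(f has_real_derivative f' z) (at z)" if "0 \<le> z" "z < 1" for z
    unfolding f_def f'_def using that
    by (auto intro!: derivative_eq_intros simp: algebra_simps)
  have df': "(f' has_real_derivative f'' z) (at z)" if "0 \<le> z" "z < 1" for z
    unfolding f'_def f''_def using that
    by (auto intro!: derivative_eq_intros simp: algebra_simps)
  have f''_nonneg: "0 \<le> f'' z" if z: "0 \<le> z" "z < 1" for z
  proof -
    define A where "A = (1 + z) powr (\<mu> - 3)"
    define B where "B = (1 - z) powr (\<mu> - 3)"
    have eA: "(1 + z) powr (\<mu> - 2) = A * (1 + z)" and eB: "(1 - z) powr (\<mu> - 2) = B * (1 - z)"
      using z powr_mult_base[of "1 + z" "\<mu> - 3"] powr_mult_base[of "1 - z" "\<mu> - 3"]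
      by (simp_all add: A_def B_def mult.commute)
    have "2 \<le> A * (1 + z) + B * (1 - z)"
      using two_le_powr_add_powr[of z r] z r eA eB by (simp add: r_def)
    moreover have "2 \<le> A + B"
      using two_le_powr_add_powr[of z "r + 1"] z r by (simp add: r_def A_def B_def algebra_simps)
    moreover have "f'' z = r * ((r - 1) * (A + B) + (2 - r) * (A * (1 + z) + B * (1 - z)) - 2)"
      unfolding f''_def eA eB by (simp add: A_def B_def r_def algebra_simps)
    ultimately show ?thesis
      using r mult_left_mono[of 2 "A + B" "r - 1"]
        mult_left_mono[of 2 "A * (1 + z) + B * (1 - z)" "2 - r"] by simp
  qed
  have f'_nonneg: "0 \<le> f' x" if "0 \<le> x" "x \<le> t" for x
  proof -
    have "f' 0 \<le> f' x"
      by (rule DERIV_nonneg_imp_nondecreasing[OF that(1)]) (use df' f''_nonneg that t in force)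
    then show ?thesis by (simp add: f'_def)
  qed
  have "f 0 \<le> f t"
    by (rule DERIV_nonneg_imp_nondecreasing[OF t(1)]) (use df f'_nonneg t in force)
  then show ?thesis by (simp add: f_def r_def)
qed

lemma powr_add_powr_le_powr_add:
  fixes k u t :: real
  assumes "1 \<le> k" "0 < u" "0 < t"
  shows "u powr k + t powr k \<le> (u + t) powr k"
proof -
  have "u * u powr (k - 1) + t * t powr (k - 1) \<le> u * (u + t) powr (k - 1) + t * (u + t) powr (k - 1)"
    using assms by (intro add_mono mult_left_mono powr_mono2) auto
  also have "\<dots> = (u + t) * (u + t) powr (k - 1)" by (simp add: distrib_right)
  finally show ?thesis using assms by (simp add: powr_mult_base)
qed

lemma half_le_ln_seven_quarters: "1 / 2 \<le> ln (7 / 4 :: real)"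
proof -
  have "exp (1 / 2 :: real) ^ 2 = exp 1" by (simp flip: exp_of_nat_mult)
  also have "\<dots> \<le> (7 / 4) ^ 2" by (rule order.trans[OF exp_le]) (simp add: power2_eq_square)
  finally have "exp (1 / 2 :: real) \<le> 7 / 4" by (rule power2_le_imp_le) simp
  then have "ln (exp (1 / 2)) \<le> ln (7 / 4 :: real)" by (subst ln_le_cancel_iff) auto
  then show ?thesis by simp
qed

section \<open>Moving probability mass between two labels\<close>

lemma weight_gap_sq_le_mu_lt_1:
  fixes Wa Wb u v D \<mu> :: real
  assumes \<mu>: "0 \<le> \<mu>" "\<mu> < 1"
    and uv: "0 < u" "u \<le> v" "u + v \<le> 1" and W: "0 \<le> Wb" "Wb < Wa"
    and gain: "\<And>\<alpha> \<beta>. 0 < \<alpha> \<Longrightarrow> 0 < \<beta> \<Longrightarrow> \<alpha> + \<beta> = u + v \<Longrightarrow>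
              Wa * (gen_ln \<mu> \<alpha> - gen_ln \<mu> u) + Wb * (gen_ln \<mu> \<beta> - gen_ln \<mu> v) \<le> D"
  shows "(Wa - Wb)\<^sup>2 \<le> 2 powr \<mu> * (2 - \<mu>) * (Wa + Wb) * D"
proof -
  define r where "r = 2 - \<mu>"
  define m where "m = Wa + Wb"
  define s where "s = (u + v) / 2"
  define \<tau> where "\<tau> = (Wa - Wb) / (m * r)"
  have r: "1 < r" "r \<le> 2" and m: "0 < m" and s: "0 < s" "s \<le> 1 / 2" "u \<le> s" "s \<le> v"
    using \<mu> W uv by (auto simp: r_def m_def s_def)
  have r\<tau>: "r * \<tau> = (Wa - Wb) / m" using r by (simp add: \<tau>_def)
  have "(Wa - Wb) / m \<le> 1" using W m by (simp add: m_def)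
  then have \<tau>0: "0 < \<tau>" and r\<tau>1: "r * \<tau> \<le> 1"
    using r r\<tau> W m by (auto simp: \<tau>_def)
  have "1 * \<tau> < r * \<tau>" using r \<tau>0 by (intro mult_strict_right_mono) auto
  then have \<tau>: "0 < \<tau>" "\<tau> < 1" "r * \<tau> \<le> 1" using \<tau>0 r\<tau>1 by linarith+
  have W_eq: "Wa = m / 2 * (1 + r * \<tau>)" "Wb = m / 2 * (1 - r * \<tau>)"
    using m unfolding r\<tau> by (auto simp: m_def field_simps)
  txt \<open>Redistribute symmetrically around the midpoint \<open>s\<close>; by concavity, raising \<open>u\<close> to
    \<open>s\<close> gains label \<open>a\<close> at least what lowering \<open>v\<close> to \<open>s\<close> costs label \<open>b\<close>.\<close>
  have "gen_ln \<mu> v - gen_ln \<mu> s \<le> gen_ln \<mu> s - gen_ln \<mu> u"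
    using gen_ln_increment_antimono[of \<mu> u s "s - u"] \<mu> s uv by (simp add: s_def field_simps)
  moreover have "0 \<le> gen_ln \<mu> v - gen_ln \<mu> s" using gen_ln_mono s by simp
  ultimately have to_midpoint: "Wb * (gen_ln \<mu> v - gen_ln \<mu> s) \<le> Wa * (gen_ln \<mu> s - gen_ln \<mu> u)"
    using W by (meson less_eq_real_def mult_mono order_trans)
  have "0 < s * (1 + \<tau>)" "0 < s * (1 - \<tau>)" using s \<tau> by simp_all
  moreover have "s * (1 + \<tau>) + s * (1 - \<tau>) = u + v" by (simp add: s_def field_simps)
  ultimately have "Wa * (gen_ln \<mu> (s * (1 + \<tau>)) - gen_ln \<mu> u) + Wb * (gen_ln \<mu> (s * (1 - \<tau>)) - gen_ln \<mu> v) \<le> D"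
    by (rule gain)
  then have "s powr (\<mu> - 1) * (Wa * gen_ln \<mu> (1 + \<tau>) + Wb * gen_ln \<mu> (1 - \<tau>)) \<le> D"
    using to_midpoint gen_ln_mult[OF s(1), of "1 + \<tau>"] gen_ln_mult[OF s(1), of "1 - \<tau>"] \<tau>
    by (simp add: algebra_simps)
  moreover have "m / 2 * (r * \<tau>\<^sup>2)
      \<le> m / 2 * ((1 + r * \<tau>) * gen_ln \<mu> (1 + \<tau>) + (1 - r * \<tau>) * gen_ln \<mu> (1 - \<tau>))"
    using pinsker_gen_ln[of \<mu> \<tau>] \<mu> \<tau> m by (intro mult_left_mono) (auto simp: r_def)
  moreover have "\<dots> = Wa * gen_ln \<mu> (1 + \<tau>) + Wb * gen_ln \<mu> (1 - \<tau>)"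
    unfolding W_eq by (simp add: field_simps)
  moreover have "2 powr (1 - \<mu>) \<le> s powr (\<mu> - 1)"
    using powr_mono2'[of "\<mu> - 1" s "1 / 2"] s \<mu> by (simp add: powr_divide flip: powr_minus_divide)
  ultimately have midpoint_gain: "2 powr (1 - \<mu>) * (m / 2 * (r * \<tau>\<^sup>2)) \<le> D"
    using m r by (smt (verit) mult_mono powr_ge_zero zero_le_mult_iff zero_le_power2 half_gt_zero)
  have "(Wa - Wb)\<^sup>2 = 2 powr \<mu> * r * m * (2 powr (1 - \<mu>) * (m / 2 * (r * \<tau>\<^sup>2)))"
    using m r by (simp add: \<tau>_def powr_diff power2_eq_square field_simps)
  also have "\<dots> \<le> 2 powr \<mu> * r * m * D" using midpoint_gain m r by (intro mult_left_mono) auto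
  finally show ?thesis by (simp add: r_def m_def)
qed

lemma exists_ln_gain_ge_gap_sq:
  fixes Wa Wb :: real
  assumes "0 \<le> Wb" "Wb < Wa"
  obtains \<tau> where "0 \<le> \<tau>" "\<tau> < 1"
    "(Wa - Wb)\<^sup>2 / (2 * (Wa + Wb)) \<le> Wa * ln (1 + \<tau>) + Wb * ln (1 - \<tau>)"
proof (cases "Wb = 0")
  case True
  txt \<open>The optimal choice \<open>\<tau> = 1\<close> is not admissible, but \<open>\<tau> = 3 / 4\<close> suffices.\<close>
  have "Wa * (1 / 2) \<le> Wa * ln (1 + 3 / 4)"
    using half_le_ln_seven_quarters assms by (intro mult_left_mono) auto
  then show ?thesis using that[of "3 / 4"] True assms by (simp add: power2_eq_square)
next
  case False
  define m where "m = Wa + Wb"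
  define \<delta> where "\<delta> = (Wa - Wb) / m"
  have m: "0 < m" and \<delta>: "0 \<le> \<delta>" "\<delta> < 1"
    using assms False by (auto simp: m_def \<delta>_def divide_less_eq)
  have W_eq: "Wa = m / 2 * (1 + \<delta>)" "Wb = m / 2 * (1 - \<delta>)"
    using m by (auto simp: \<delta>_def m_def field_simps)
  have "(Wa - Wb)\<^sup>2 / (2 * m) = m / 2 * \<delta>\<^sup>2"
    using m by (simp add: \<delta>_def power2_eq_square field_simps)
  also have "\<dots> \<le> m / 2 * ((1 + \<delta>) * ln (1 + \<delta>) + (1 - \<delta>) * ln (1 - \<delta>))"
    using pinsker_gen_ln[of 1 \<delta>] \<delta> m by (intro mult_left_mono) (auto simp: gen_ln_def)
  also have "\<dots> = Wa * ln (1 + \<delta>) + Wb * ln (1 - \<delta>)"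
    unfolding W_eq by (simp add: field_simps)
  finally show ?thesis using that \<delta> by (simp add: m_def)
qed

lemma weight_gap_sq_le_mu_lt_2:
  fixes Wa Wb u v D \<mu> N :: real
  assumes \<mu>: "1 \<le> \<mu>" "\<mu> < 2"
    and uv: "0 < u" "u \<le> v" and W: "0 \<le> Wb" "Wb < Wa" and N: "0 < N" "1 \<le> N * v"
    and gain: "\<And>\<alpha> \<beta>. 0 < \<alpha> \<Longrightarrow> 0 < \<beta> \<Longrightarrow> \<alpha> + \<beta> = u + v \<Longrightarrow>
              Wa * (gen_ln \<mu> \<alpha> - gen_ln \<mu> u) + Wb * (gen_ln \<mu> \<beta> - gen_ln \<mu> v) \<le> D"
  shows "(Wa - Wb)\<^sup>2 \<le> 2 * N powr (\<mu> - 1) * (Wa + Wb) * D"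
proof -
  have v: "0 < v" using uv by simp
  have ln_gain: "v powr (\<mu> - 1) * (Wa * ln (1 + \<tau>) + Wb * ln (1 - \<tau>)) \<le> D"
    if \<tau>: "0 \<le> \<tau>" "\<tau> < 1" for \<tau>
  proof -
    have "v powr (\<mu> - 1) * ln (1 + \<tau>) \<le> v powr (\<mu> - 1) * gen_ln \<mu> (1 + \<tau>)"
      using ln_le_gen_ln[of \<mu> "1 + \<tau>"] \<mu> \<tau> by (intro mult_left_mono) auto
    also have "\<dots> = gen_ln \<mu> (v + v * \<tau>) - gen_ln \<mu> v"
      using gen_ln_mult[of v "1 + \<tau>" \<mu>] v \<tau> by (simp add: algebra_simps)
    also have "\<dots> \<le> gen_ln \<mu> (u + v * \<tau>) - gen_ln \<mu> u"
      using \<mu> uv \<tau> v by (intro gen_ln_increment_antimono) auto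
    finally have "Wa * (v powr (\<mu> - 1) * ln (1 + \<tau>)) \<le> Wa * (gen_ln \<mu> (u + v * \<tau>) - gen_ln \<mu> u)"
      using W by (intro mult_left_mono) auto
    moreover have "Wb * (v powr (\<mu> - 1) * ln (1 - \<tau>)) \<le> Wb * (gen_ln \<mu> (v * (1 - \<tau>)) - gen_ln \<mu> v)"
      using gen_ln_mult[of v "1 - \<tau>" \<mu>] ln_le_gen_ln[of \<mu> "1 - \<tau>"] \<mu> \<tau> v W
      by (intro mult_left_mono) auto
    moreover have "Wa * (gen_ln \<mu> (u + v * \<tau>) - gen_ln \<mu> u) + Wb * (gen_ln \<mu> (v * (1 - \<tau>)) - gen_ln \<mu> v) \<le> D"
      using uv \<tau> v by (intro gain) (auto simp: algebra_simps add_pos_nonneg)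
    ultimately show ?thesis by (simp add: algebra_simps)
  qed
  obtain \<tau> where \<tau>: "0 \<le> \<tau>" "\<tau> < 1"
    and pinsker: "(Wa - Wb)\<^sup>2 / (2 * (Wa + Wb)) \<le> Wa * ln (1 + \<tau>) + Wb * ln (1 - \<tau>)"
    using exists_ln_gain_ge_gap_sq W by blast
  define G where "G = (Wa - Wb)\<^sup>2 / (2 * (Wa + Wb))"
  have "1 \<le> (N * v) powr (\<mu> - 1)" using N \<mu> by (intro ge_one_powr_ge_zero) auto
  then have "1 * G \<le> (N powr (\<mu> - 1) * v powr (\<mu> - 1)) * G"
    using N v W by (intro mult_right_mono) (auto simp: G_def powr_mult)
  then have "G \<le> N powr (\<mu> - 1) * (v powr (\<mu> - 1) * G)" by (simp add: mult.assoc)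
  also have "\<dots> \<le> N powr (\<mu> - 1) * D"
    using pinsker ln_gain[OF \<tau>] unfolding G_def[symmetric]
    by (intro mult_left_mono) (meson mult_left_mono order_trans powr_ge_zero, simp)
  finally show ?thesis using W by (simp add: G_def pos_divide_le_eq algebra_simps)
qed

lemma weight_gap_le_mu_ge_2:
  fixes Wa Wb u v D \<mu> N :: real
  assumes \<mu>: "2 \<le> \<mu>"
    and uv: "0 < u" "0 < v" and W: "0 \<le> Wb" "Wb \<le> Wa" and N: "0 < N" "1 \<le> N * v"
    and gain: "\<And>\<alpha> \<beta>. 0 < \<alpha> \<Longrightarrow> 0 < \<beta> \<Longrightarrow> \<alpha> + \<beta> = u + v \<Longrightarrow>
              Wa * (gen_ln \<mu> \<alpha> - gen_ln \<mu> u) + Wb * (gen_ln \<mu> \<beta> - gen_ln \<mu> v) \<le> D"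
  shows "Wa - Wb \<le> (\<mu> - 1) * N powr (\<mu> - 1) * D"
proof -
  define k where "k = \<mu> - 1"
  have k: "1 \<le> k" and gen_ln_eq: "gen_ln \<mu> x = (x powr k - 1) / k" for x
    using \<mu> by (auto simp: gen_ln_def k_def)
  txt \<open>Move mass \<open>t\<close> from \<open>b\<close> to \<open>a\<close> and let \<open>t\<close> tend to \<open>v\<close>.\<close>
  have bound: "(Wa * t powr k - Wb * v powr k) / k \<le> D" if t: "0 < t" "t < v" for t
  proof -
    have "Wa * t powr k \<le> Wa * ((u + t) powr k - u powr k)"
      using powr_add_powr_le_powr_add[of k u t] k uv t W by (intro mult_left_mono) auto
    moreover have "- Wb * v powr k \<le> Wb * ((v - t) powr k - v powr k)"
      using W by (simp add: right_diff_distrib)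
    moreover have "k * (Wa * (gen_ln \<mu> (u + t) - gen_ln \<mu> u) + Wb * (gen_ln \<mu> (v - t) - gen_ln \<mu> v))
        = Wa * ((u + t) powr k - u powr k) + Wb * ((v - t) powr k - v powr k)"
      using k unfolding gen_ln_eq by (simp add: field_simps)
    ultimately have "Wa * t powr k - Wb * v powr k
        \<le> k * (Wa * (gen_ln \<mu> (u + t) - gen_ln \<mu> u) + Wb * (gen_ln \<mu> (v - t) - gen_ln \<mu> v))"
      by linarith
    also have "\<dots> \<le> k * D" using t uv k by (intro mult_left_mono gain) auto
    finally show ?thesis using k by (simp add: pos_divide_le_eq mult.commute)
  qed
  have "((\<lambda>t. (Wa * t powr k - Wb * v powr k) / k) \<longlongrightarrow> (Wa - Wb) * v powr k / k) (at_left v)"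
    using uv k by (auto intro!: tendsto_eq_intros simp: algebra_simps)
  moreover have "eventually (\<lambda>t. (Wa * t powr k - Wb * v powr k) / k \<le> D) (at_left v)"
    using eventually_at_left_real[OF uv(2)] by eventually_elim (use bound in auto)
  ultimately have limit: "(Wa - Wb) * v powr k / k \<le> D"
    by (rule tendsto_upperbound) simp
  have "1 \<le> (N * v) powr k" using N k by (intro ge_one_powr_ge_zero) auto
  then have "Wa - Wb \<le> (Wa - Wb) * (N powr k * v powr k)"
    using N uv W by (simp add: powr_mult mult_le_cancel_left1)
  also have "\<dots> = k * N powr k * ((Wa - Wb) * v powr k / k)" using k by (simp add: field_simps)
  also have "\<dots> \<le> k * N powr k * D" using limit k by (intro mult_left_mono) auto
  finally show ?thesis by (simp add: k_def)
qed

lemma sum_fun_upd2_diff: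
  fixes G :: "'a \<Rightarrow> 'b \<Rightarrow> 'c::ab_group_add"
  assumes "finite A" "a \<in> A" "b \<in> A" "a \<noteq> b"
  shows "(\<Sum>y\<in>A. G y ((q(a := \<alpha>, b := \<beta>)) y)) - (\<Sum>y\<in>A. G y (q y))
         = (G a \<alpha> - G a (q a)) + (G b \<beta> - G b (q b))"
proof -
  have "(\<Sum>y\<in>A. G y ((q(a := \<alpha>, b := \<beta>)) y)) - (\<Sum>y\<in>A. G y (q y))
      = (\<Sum>y\<in>A. (if y = a then G a \<alpha> - G a (q a) else 0) + (if y = b then G b \<beta> - G b (q b) else 0))"
    unfolding sum_subtractf[symmetric] using assms by (intro sum.cong) auto
  also have "\<dots> = (G a \<alpha> - G a (q a)) + (G b \<beta> - G b (q b))"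
    using assms by (simp add: sum.distrib)
  finally show ?thesis .
qed

lemma two_point_gain_le:
  fixes W q :: "'a \<Rightarrow> real"
  assumes A: "finite A" "a \<in> A" "b \<in> A" "a \<noteq> b"
    and q: "\<And>y. y \<in> A \<Longrightarrow> 0 < q y" "(\<Sum>y\<in>A. q y) = 1"
    and gain: "\<And>q'. (\<And>y. y \<in> A \<Longrightarrow> 0 < q' y) \<Longrightarrow> (\<Sum>y\<in>A. q' y) = 1 \<Longrightarrow>
                 (\<Sum>y\<in>A. W y * gen_ln \<mu> (q' y)) - (\<Sum>y\<in>A. W y * gen_ln \<mu> (q y)) \<le> D"
    and \<alpha>\<beta>: "0 < \<alpha>" "0 < \<beta>" "\<alpha> + \<beta> = q a + q b"
  shows "W a * (gen_ln \<mu> \<alpha> - gen_ln \<mu> (q a)) + W b * (gen_ln \<mu> \<beta> - gen_ln \<mu> (q b)) \<le> D"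
proof -
  let ?q' = "q(a := \<alpha>, b := \<beta>)"
  have "(\<Sum>y\<in>A. ?q' y) - (\<Sum>y\<in>A. q y) = (\<alpha> - q a) + (\<beta> - q b)"
    using sum_fun_upd2_diff[OF A, of "\<lambda>_ t. t" q \<alpha> \<beta>] by simp
  then have "(\<Sum>y\<in>A. ?q' y) = 1" using q(2) \<alpha>\<beta>(3) by simp
  moreover have "0 < ?q' y" if "y \<in> A" for y using q(1) that \<alpha>\<beta> by simp
  ultimately have "(\<Sum>y\<in>A. W y * gen_ln \<mu> (?q' y)) - (\<Sum>y\<in>A. W y * gen_ln \<mu> (q y)) \<le> D"
    by (intro gain) auto
  then show ?thesis
    using sum_fun_upd2_diff[OF A, of "\<lambda>y t. W y * gen_ln \<mu> t" q \<alpha> \<beta>] by (simp add: algebra_simps)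
qed

lemma Gamma_mu_nonneg: "0 \<le> t \<Longrightarrow> c < 1 \<Longrightarrow> 0 \<le> \<mu> \<Longrightarrow> 0 \<le> Gamma_mu n c \<mu> t"
  by (auto simp: Gamma_mu_def)

lemma weight_gap_le_Gamma_mu_of_two_point:
  fixes Wa Wb u v D \<mu> c :: real
  assumes \<mu>: "0 \<le> \<mu>" and c: "c < 1"
    and uv: "0 < u" "u \<le> v" "u + v \<le> 1" and Nv: "1 \<le> (real n + 1) * v"
    and W: "0 \<le> Wb" "Wb < Wa" "Wa + Wb \<le> 2 - c"
    and gain: "\<And>\<alpha> \<beta>. 0 < \<alpha> \<Longrightarrow> 0 < \<beta> \<Longrightarrow> \<alpha> + \<beta> = u + v \<Longrightarrow>
              Wa * (gen_ln \<mu> \<alpha> - gen_ln \<mu> u) + Wb * (gen_ln \<mu> \<beta> - gen_ln \<mu> v) \<le> D"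
  shows "Wa - Wb \<le> Gamma_mu n c \<mu> D"
proof -
  have D: "0 \<le> D" using gain[of u v] uv by simp
  have N: "0 < real n + 1" by simp
  consider "\<mu> < 1" | "1 \<le> \<mu>" "\<mu> < 2" | "2 \<le> \<mu>" by linarith
  then show ?thesis
  proof cases
    case 1
    have "(Wa - Wb)\<^sup>2 \<le> 2 powr \<mu> * (2 - \<mu>) * (Wa + Wb) * D"
      using weight_gap_sq_le_mu_lt_1[OF \<mu> 1 uv W(1,2) gain] .
    also have "\<dots> \<le> 2 powr \<mu> * (2 - \<mu>) * (2 - c) * D"
      using W D 1 by (intro mult_right_mono mult_left_mono) auto
    also have "\<dots> = (2 - c) * 2 powr \<mu> * (2 - \<mu>) * D" by (simp only: mult_ac)
    finally have "Wa - Wb \<le> sqrt ((2 - c) * 2 powr \<mu> * (2 - \<mu>) * D)" by (rule real_le_rsqrt)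
    then show ?thesis using 1 by (simp only: Gamma_mu_def if_True)
  next
    case 2
    have "(Wa - Wb)\<^sup>2 \<le> 2 * (real n + 1) powr (\<mu> - 1) * (Wa + Wb) * D"
      using weight_gap_sq_le_mu_lt_2[OF 2 uv(1,2) W(1,2) N Nv gain] .
    also have "\<dots> \<le> 2 * (real n + 1) powr (\<mu> - 1) * (2 - c) * D"
      using W D by (intro mult_right_mono mult_left_mono) auto
    also have "\<dots> = 2 * (2 - c) * (real n + 1) powr (\<mu> - 1) * D" by (simp only: mult_ac)
    finally have "Wa - Wb \<le> sqrt (2 * (2 - c) * (real n + 1) powr (\<mu> - 1) * D)"
      by (rule real_le_rsqrt)
    then show ?thesis using 2 by (simp add: Gamma_mu_def)
  next
    case 3
    have "0 < v" "Wb \<le> Wa" using uv W by simp_all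
    then have "Wa - Wb \<le> (\<mu> - 1) * (real n + 1) powr (\<mu> - 1) * D"
      using weight_gap_le_mu_ge_2[OF 3 uv(1) _ W(1) _ N Nv gain] by blast
    then show ?thesis using 3 by (simp add: Gamma_mu_def)
  qed
qed

lemma weight_gap_le_Gamma_mu:
  fixes W q :: "nat \<Rightarrow> real"
  assumes ab: "a \<in> {1..n+1}" "b \<in> {1..n+1}"
    and q: "\<And>y. y \<in> {1..n+1} \<Longrightarrow> 0 < q y" "(\<Sum>y\<in>{1..n+1}. q y) = 1"
      "\<And>y. y \<in> {1..n+1} \<Longrightarrow> q y \<le> q b"
    and W: "\<And>y. y \<in> {1..n+1} \<Longrightarrow> 0 \<le> W y" "\<And>y. y \<in> {1..n+1} \<Longrightarrow> W y \<le> W a"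
      "(\<Sum>y\<in>{1..n+1}. W y) = 2 - c"
    and c: "c < 1" and \<mu>: "0 \<le> \<mu>"
    and gain: "\<And>q'. (\<And>y. y \<in> {1..n+1} \<Longrightarrow> 0 < q' y) \<Longrightarrow> (\<Sum>y\<in>{1..n+1}. q' y) = 1 \<Longrightarrow>
                 (\<Sum>y\<in>{1..n+1}. W y * gen_ln \<mu> (q' y)) - (\<Sum>y\<in>{1..n+1}. W y * gen_ln \<mu> (q y)) \<le> D"
  shows "W a - W b \<le> Gamma_mu n c \<mu> D"
proof (cases "W b < W a")
  case False
  have "0 \<le> D" using gain[OF q(1,2)] by simp
  then show ?thesis using False Gamma_mu_nonneg[of D c \<mu> n] c \<mu> by linarith
next
  case True
  let ?A = "{1..n+1}"
  have "a \<noteq> b" using True by auto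
  have "q a + q b = (\<Sum>y\<in>{a, b}. q y)" using \<open>a \<noteq> b\<close> by simp
  also have "\<dots> \<le> (\<Sum>y\<in>?A. q y)" using q(1) ab by (intro sum_mono2) (auto intro: less_imp_le)
  finally have uv: "q a + q b \<le> 1" using q(2) by simp
  have "W a + W b = (\<Sum>y\<in>{a, b}. W y)" using \<open>a \<noteq> b\<close> by simp
  also have "\<dots> \<le> (\<Sum>y\<in>?A. W y)" using W(1) ab by (intro sum_mono2) auto
  finally have Wab: "W a + W b \<le> 2 - c" using W(3) by simp
  have "1 \<le> (\<Sum>y\<in>?A. q b)" unfolding q(2)[symmetric] using q(3) by (rule sum_mono)
  then have Nv: "1 \<le> (real n + 1) * q b" by (simp add: add.commute)
  have two_point: "W a * (gen_ln \<mu> \<alpha> - gen_ln \<mu> (q a)) + W b * (gen_ln \<mu> \<beta> - gen_ln \<mu> (q b)) \<le> D"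
    if "0 < \<alpha>" "0 < \<beta>" "\<alpha> + \<beta> = q a + q b" for \<alpha> \<beta>
    using two_point_gain_le[of ?A a b q W \<mu> D \<alpha> \<beta>] ab \<open>a \<noteq> b\<close> q(1,2) gain that by blast
  show ?thesis
    by (rule weight_gap_le_Gamma_mu_of_two_point[OF \<mu> c _ _ uv Nv _ True Wab two_point])
      (use q ab W(1) in auto)
qed

section \<open>Conditional losses\<close>

lemma symmetric_complete_realizes:
  assumes "symmetric_hyp n H" "complete_hyp n H"
  obtains g where "g \<in> H" "\<And>y. y \<in> {1..n+1} \<Longrightarrow> g x y = s y"
proof -
  let ?A = "{1..n+1}"
  obtain F where "\<forall>x. {(\<lambda>y\<in>?A. h x y) | h. h \<in> H} = {(\<lambda>y\<in>?A. f y x) | f. \<forall>y\<in>?A. f y \<in> F}"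
    using assms(1) unfolding symmetric_hyp_def by blast
  then have F: "{(\<lambda>y\<in>?A. h x y) | h. h \<in> H} = {(\<lambda>y\<in>?A. f y x) | f. \<forall>y\<in>?A. f y \<in> F}"
    by (rule spec)
  have "\<exists>\<phi>. \<phi> \<in> F \<and> \<phi> x = t" for t
  proof -
    have "{h x 1 | h. h \<in> H} = UNIV" using assms(2) by (simp add: complete_hyp_def)
    then have "t \<in> {h x 1 | h. h \<in> H}" by (simp only: UNIV_I)
    then obtain h where h: "h \<in> H" "h x 1 = t" by blast
    then have "(\<lambda>y\<in>?A. h x y) \<in> {(\<lambda>y\<in>?A. h x y) | h. h \<in> H}" by blast
    then have "(\<lambda>y\<in>?A. h x y) \<in> {(\<lambda>y\<in>?A. f y x) | f. \<forall>y\<in>?A. f y \<in> F}" unfolding F .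
    then obtain f where f: "(\<lambda>y\<in>?A. h x y) = (\<lambda>y\<in>?A. f y x)" "\<forall>y\<in>?A. f y \<in> F" by blast
    have "f 1 x = t" using fun_cong[OF f(1), of 1] h(2) by simp
    moreover have "f 1 \<in> F" using f(2) by simp
    ultimately show ?thesis by blast
  qed
  then have "\<forall>y. \<exists>\<phi>. \<phi> \<in> F \<and> \<phi> x = s y" by blast
  from choice[OF this] obtain f where f: "\<forall>y. f y \<in> F \<and> f y x = s y" by blast
  then have "(\<lambda>y\<in>?A. f y x) \<in> {(\<lambda>y\<in>?A. f y x) | f. \<forall>y\<in>?A. f y \<in> F}"
    by (intro CollectI exI[of _ f]) simp
  then have "(\<lambda>y\<in>?A. f y x) \<in> {(\<lambda>y\<in>?A. h x y) | h. h \<in> H}" unfolding F .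
  then have "\<exists>g. (\<lambda>y\<in>?A. f y x) = (\<lambda>y\<in>?A. g x y) \<and> g \<in> H" by (simp only: mem_Collect_eq)
  then obtain g where g: "(\<lambda>y\<in>?A. f y x) = (\<lambda>y\<in>?A. g x y)" "g \<in> H" by iprover
  have "g x y = s y" if "y \<in> ?A" for y using fun_cong[OF g(1), of y] that f by simp
  with g(2) show ?thesis by (rule that)
qed

definition label_weight :: "nat \<Rightarrow> ('x \<Rightarrow> nat \<Rightarrow> real) \<Rightarrow> real \<Rightarrow> 'x \<Rightarrow> nat \<Rightarrow> real" where
  "label_weight n p c x y = (if y = n + 1 then 1 - c else p x y)"

lemma label_weight_nonneg:
  "(\<And>y. y \<in> {1..n} \<Longrightarrow> 0 \<le> p x y) \<Longrightarrow> c \<le> 1 \<Longrightarrow> y \<in> {1..n+1} \<Longrightarrow> 0 \<le> label_weight n p c x y"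
  by (auto simp: label_weight_def)

lemma sum_label_weight:
  assumes "(\<Sum>y\<in>{1..n}. p x y) = 1"
  shows "(\<Sum>y\<in>{1..n+1}. label_weight n p c x y) = 2 - c"
proof -
  have "(\<Sum>y\<in>{1..n}. label_weight n p c x y) = (\<Sum>y\<in>{1..n}. p x y)"
    by (intro sum.cong) (auto simp: label_weight_def)
  then show ?thesis using assms by (simp add: label_weight_def)
qed

definition softmax :: "nat \<Rightarrow> (nat \<Rightarrow> real) \<Rightarrow> nat \<Rightarrow> real" where
  "softmax n s y = exp (s y) / (\<Sum>y'\<in>{1..n+1}. exp (s y'))"

lemma softmax_denominator_pos: "0 < (\<Sum>y\<in>{1..n+1}. exp (s y))" for n :: nat and s :: "nat \<Rightarrow> real"
  by (intro sum_pos) auto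

lemma softmax_pos: "0 < softmax n s y"
  unfolding softmax_def using softmax_denominator_pos by (rule divide_pos_pos[OF exp_gt_zero])

lemma sum_softmax: "(\<Sum>y\<in>{1..n+1}. softmax n s y) = 1"
  unfolding softmax_def sum_divide_distrib[symmetric]
  using softmax_denominator_pos[where n=n and s=s] by (intro divide_self) linarith

lemma softmax_le_one: "y \<in> {1..n+1} \<Longrightarrow> softmax n s y \<le> 1"
  using member_le_sum[of y "{1..n+1}" "softmax n s"] softmax_pos sum_softmax
  by (metis finite_atLeastAtMost less_imp_le)

lemma softmax_mono: "s y \<le> s y' \<Longrightarrow> softmax n s y \<le> softmax n s y'"
  unfolding softmax_def using softmax_denominator_pos[where n=n and s=s]
  by (intro divide_right_mono) auto

lemma softmax_cong:
  "(\<And>y. y \<in> {1..n+1} \<Longrightarrow> s y = s' y) \<Longrightarrow> y \<in> {1..n+1} \<Longrightarrow> softmax n s y = softmax n s' y"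
  unfolding softmax_def by (metis (no_types, lifting) sum.cong)

lemma softmax_eq_of_ln:
  assumes "\<And>y. y \<in> {1..n+1} \<Longrightarrow> 0 < q y" "(\<Sum>y\<in>{1..n+1}. q y) = 1"
    and "\<And>y. y \<in> {1..n+1} \<Longrightarrow> s y = ln (q y)" "y \<in> {1..n+1}"
  shows "softmax n s y = q y"
proof -
  have "(\<Sum>y\<in>{1..n+1}. exp (s y)) = (\<Sum>y\<in>{1..n+1}. q y)"
    using assms(1,3) by (intro sum.cong) simp_all
  then show ?thesis using assms by (simp add: softmax_def)
qed

lemma ell_eq_neg_gen_ln_softmax:
  assumes "y \<in> {1..n+1}"
  shows "ell n \<mu> g x y = - gen_ln \<mu> (softmax n (g x) y)"
proof -
  define Z where "Z = (\<Sum>y'\<in>{1..n+1}. exp (g x y'))"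
  define e where "e = exp (g x y)"
  have pos: "0 < Z" "0 < e" unfolding Z_def e_def using softmax_denominator_pos by auto
  have "(\<Sum>y'\<in>{1..n+1}. exp (g x y' - g x y)) = Z / e"
    unfolding Z_def e_def sum_divide_distrib by (simp add: exp_diff)
  then have "ell n \<mu> g x y = (if \<mu> = 1 then ln (Z / e) else ((Z / e) powr (1 - \<mu>) - 1) / (1 - \<mu>))"
    by (simp add: ell_def)
  moreover have "softmax n (g x) y = e / Z" by (simp add: softmax_def Z_def e_def)
  moreover have "ln (Z / e) = - ln (e / Z)" using pos by (simp add: ln_div)
  moreover have "(Z / e) powr (1 - \<mu>) = (e / Z) powr (\<mu> - 1)"
    using powr_minus[of "Z / e" "\<mu> - 1"] pos by (simp add: inverse_powr[symmetric])
  moreover have "a / (1 - \<mu>) = - (a / (\<mu> - 1))" for a :: real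
    using divide_minus_right[of a "\<mu> - 1"] by simp
  ultimately show ?thesis by (simp add: gen_ln_def)
qed

lemma ell_nonneg:
  assumes "y \<in> {1..n+1}"
  shows "0 \<le> ell n \<mu> g x y"
proof -
  have "gen_ln \<mu> (softmax n (g x) y) \<le> gen_ln \<mu> 1"
    using assms by (intro gen_ln_mono softmax_pos softmax_le_one)
  then show ?thesis using assms by (simp add: ell_eq_neg_gen_ln_softmax)
qed

lemma weighted_gen_ln_softmax_nonpos:
  assumes "\<And>y. y \<in> {1..n+1} \<Longrightarrow> 0 \<le> W y"
  shows "(\<Sum>y\<in>{1..n+1}. W y * gen_ln \<mu> (softmax n s y)) \<le> 0"
proof (intro sum_nonpos mult_nonneg_nonpos assms)
  fix y :: nat assume "y \<in> {1..n+1}"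
  then have "gen_ln \<mu> (softmax n s y) \<le> gen_ln \<mu> 1" by (intro gen_ln_mono softmax_pos softmax_le_one)
  then show "gen_ln \<mu> (softmax n s y) \<le> 0" by simp
qed

lemma cond_loss_L_mu_nonneg:
  assumes "\<And>y. y \<in> {1..n} \<Longrightarrow> 0 \<le> p x y" "c < 1"
  shows "0 \<le> cond_loss n p (L_mu n c \<mu>) g x"
  unfolding cond_loss_def L_mu_def using assms
  by (intro sum_nonneg mult_nonneg_nonneg add_nonneg_nonneg ell_nonneg) auto

lemma cond_loss_L_mu_eq:
  assumes "(\<Sum>y\<in>{1..n}. p x y) = 1"
  shows "cond_loss n p (L_mu n c \<mu>) g x
           = - (\<Sum>y\<in>{1..n+1}. label_weight n p c x y * gen_ln \<mu> (softmax n (g x) y))"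
proof -
  have "cond_loss n p (L_mu n c \<mu>) g x
      = (\<Sum>y\<in>{1..n}. p x y * ell n \<mu> g x y) + (\<Sum>y\<in>{1..n}. p x y) * ((1 - c) * ell n \<mu> g x (n + 1))"
    unfolding cond_loss_def L_mu_def by (simp add: distrib_left sum.distrib sum_distrib_right)
  also have "\<dots> = (\<Sum>y\<in>insert (n + 1) {1..n}. label_weight n p c x y * ell n \<mu> g x y)"
    using assms by (simp add: label_weight_def)
  also have "insert (n + 1) {1..n} = {1..n+1}" by auto
  also have "(\<Sum>y\<in>{1..n+1}. label_weight n p c x y * ell n \<mu> g x y)
      = (\<Sum>y\<in>{1..n+1}. - (label_weight n p c x y * gen_ln \<mu> (softmax n (g x) y)))"
    by (intro sum.cong) (simp_all add: ell_eq_neg_gen_ln_softmax)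
  finally show ?thesis by (simp only: sum_negf)
qed

lemma pred_label_mem_max:
  assumes n: "1 \<le> n" and tb: "\<And>S. S \<noteq> {} \<Longrightarrow> S \<subseteq> {1..n} \<Longrightarrow> tb x S \<in> S"
  shows "pred_label n tb g x \<in> {1..n+1}"
    and "\<And>y. y \<in> {1..n+1} \<Longrightarrow> g x y \<le> g x (pred_label n tb g x)"
proof -
  define M where "M = Max ((\<lambda>y. g x y) ` {1..n})"
  define S where "S = {y \<in> {1..n}. g x y = M}"
  have M: "g x y \<le> M" if "y \<in> {1..n}" for y
    unfolding M_def using that by (intro Max_ge) auto
  have "M \<in> (\<lambda>y. g x y) ` {1..n}" unfolding M_def using n by (intro Max_in) auto
  then have "S \<noteq> {}" by (auto simp: S_def)
  then have "tb x S \<in> S" by (rule tb) (auto simp: S_def)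
  then have tbS: "tb x S \<in> {1..n}" "g x (tb x S) = M" by (auto simp: S_def)
  have pred: "pred_label n tb g x = (if M \<le> g x (n + 1) then n + 1 else tb x S)"
    unfolding pred_label_def M_def S_def ..
  show "pred_label n tb g x \<in> {1..n+1}" using tbS by (simp add: pred)
  show "g x y \<le> g x (pred_label n tb g x)" if "y \<in> {1..n+1}" for y
  proof (cases "y = n + 1")
    case False
    then have "g x y \<le> M" using that M by simp
    then show ?thesis using tbS by (auto simp: pred)
  qed (use tbS in \<open>auto simp: pred\<close>)
qed

lemma pred_label_eq_strict_max:
  assumes "1 \<le> n" "\<And>S. S \<noteq> {} \<Longrightarrow> S \<subseteq> {1..n} \<Longrightarrow> tb x S \<in> S"
    and "a \<in> {1..n+1}" "\<And>y. y \<in> {1..n+1} \<Longrightarrow> y \<noteq> a \<Longrightarrow> g x y < g x a"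
  shows "pred_label n tb g x = a"
  using pred_label_mem_max[where tb=tb and x=x and g=g, OF assms(1,2)] assms(3,4) by force

lemma cond_loss_L_abs_eq:
  assumes n: "1 \<le> n" and tb: "\<And>S. S \<noteq> {} \<Longrightarrow> S \<subseteq> {1..n} \<Longrightarrow> tb x S \<in> S"
    and p: "(\<Sum>y\<in>{1..n}. p x y) = 1"
  shows "cond_loss n p (L_abs n tb c) g x = 1 - label_weight n p c x (pred_label n tb g x)"
proof -
  define b where "b = pred_label n tb g x"
  have b: "b \<in> {1..n+1}" unfolding b_def by (rule pred_label_mem_max[where tb=tb and x=x, OF n tb])
  have "cond_loss n p (L_abs n tb c) g x = (\<Sum>y\<in>{1..n}. p x y * (if b = n + 1 then c else 1)
      - (if b = y then p x y else 0))"
    unfolding cond_loss_def L_abs_def b_def[symmetric] by (intro sum.cong) auto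
  also have "\<dots> = 1 - label_weight n p c x b"
    using p b by (simp add: sum_subtractf sum_distrib_right[symmetric] label_weight_def)
  finally show ?thesis by (simp add: b_def)
qed

lemma cond_loss_L_abs_bounds:
  assumes n: "1 \<le> n" and tb: "\<And>S. S \<noteq> {} \<Longrightarrow> S \<subseteq> {1..n} \<Longrightarrow> tb x S \<in> S"
    and p: "\<And>y. y \<in> {1..n} \<Longrightarrow> 0 \<le> p x y" "(\<Sum>y\<in>{1..n}. p x y) = 1" and c: "0 \<le> c" "c \<le> 1"
  shows "0 \<le> cond_loss n p (L_abs n tb c) g x" "cond_loss n p (L_abs n tb c) g x \<le> 1"
proof -
  have "label_weight n p c x y \<le> 1" if "y \<in> {1..n}" for y
    using member_le_sum[of y "{1..n}" "p x"] p that by (simp add: label_weight_def)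
  then have "label_weight n p c x y \<le> 1" if "y \<in> {1..n+1}" for y
    using that c by (cases "y = n + 1") (auto simp: label_weight_def)
  then show "0 \<le> cond_loss n p (L_abs n tb c) g x" "cond_loss n p (L_abs n tb c) g x \<le> 1"
    using cond_loss_L_abs_eq[where tb=tb and x=x and p=p and c=c and g=g, OF n tb p(2)]
      label_weight_nonneg[where p=p and x=x, OF p(1) c(2)]
      pred_label_mem_max(1)[where tb=tb and x=x and g=g, OF n tb] by auto
qed

lemma INF_cond_loss_L_abs_eq:
  assumes n: "1 \<le> n" and tb: "\<And>S. S \<noteq> {} \<Longrightarrow> S \<subseteq> {1..n} \<Longrightarrow> tb x S \<in> S"
    and p: "(\<Sum>y\<in>{1..n}. p x y) = 1" and H: "symmetric_hyp n H" "complete_hyp n H"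
  shows "(INF g\<in>H. cond_loss n p (L_abs n tb c) g x) = 1 - Max (label_weight n p c x ` {1..n+1})"
proof -
  let ?W = "label_weight n p c x" and ?A = "{1..n+1}"
  have "Max (?W ` ?A) \<in> ?W ` ?A" by (intro Max_in) auto
  then obtain a where a: "Max (?W ` ?A) = ?W a" "a \<in> ?A" by (rule imageE)
  obtain g where g: "g \<in> H" "\<And>y. y \<in> ?A \<Longrightarrow> g x y = (if y = a then 1 else 0)"
    using symmetric_complete_realizes[OF H, where x=x and s="\<lambda>y. if y = a then 1 else 0"] by blast
  have "pred_label n tb g x = a"
    using a(2) g(2) by (intro pred_label_eq_strict_max[where tb=tb and x=x, OF n tb]) auto
  show ?thesis
  proof (rule cInf_eq_minimum)
    show "1 - Max (?W ` ?A) \<in> (\<lambda>g. cond_loss n p (L_abs n tb c) g x) ` H"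
      using g(1) cond_loss_L_abs_eq[where tb=tb and x=x and p=p and c=c and g=g, OF n tb p]
        \<open>pred_label n tb g x = a\<close> a(1) by force
  next
    fix z assume "z \<in> (\<lambda>g. cond_loss n p (L_abs n tb c) g x) ` H"
    then obtain g' where "z = 1 - ?W (pred_label n tb g' x)"
      using cond_loss_L_abs_eq[where tb=tb and x=x and p=p and c=c, OF n tb p] by blast
    moreover have "?W (pred_label n tb g' x) \<le> Max (?W ` ?A)"
      using pred_label_mem_max(1)[where tb=tb and x=x and g=g', OF n tb] by (intro Max_ge) auto
    ultimately show "1 - Max (?W ` ?A) \<le> z" by linarith
  qed
qed

lemma INF_cond_loss_L_mu_le:
  assumes p: "\<And>y. y \<in> {1..n} \<Longrightarrow> 0 \<le> p x y" "(\<Sum>y\<in>{1..n}. p x y) = 1" and c: "c < 1"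
    and H: "symmetric_hyp n H" "complete_hyp n H"
    and q: "\<And>y. y \<in> {1..n+1} \<Longrightarrow> 0 < q y" "(\<Sum>y\<in>{1..n+1}. q y) = 1"
  shows "(INF g\<in>H. cond_loss n p (L_mu n c \<mu>) g x)
           \<le> - (\<Sum>y\<in>{1..n+1}. label_weight n p c x y * gen_ln \<mu> (q y))"
proof -
  obtain g where g: "g \<in> H" "\<And>y. y \<in> {1..n+1} \<Longrightarrow> g x y = ln (q y)"
    using symmetric_complete_realizes[OF H, where x=x and s="\<lambda>y. ln (q y)"] by blast
  have "(INF g\<in>H. cond_loss n p (L_mu n c \<mu>) g x) \<le> cond_loss n p (L_mu n c \<mu>) g x"
    using cond_loss_L_mu_nonneg[where p=p and x=x, OF p(1) c]
    by (intro cINF_lower[OF _ g(1)] bdd_belowI2) auto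
  also have "\<dots> = - (\<Sum>y\<in>{1..n+1}. label_weight n p c x y * gen_ln \<mu> (q y))"
    unfolding cond_loss_L_mu_eq[where p=p and x=x, OF p(2)] using softmax_eq_of_ln[OF q g(2)] by simp
  finally show ?thesis .
qed

lemma cond_regret_L_abs_le_Gamma_mu:
  assumes n: "1 \<le> n" and c: "c < 1" and \<mu>: "0 \<le> \<mu>"
    and tb: "\<And>S. S \<noteq> {} \<Longrightarrow> S \<subseteq> {1..n} \<Longrightarrow> tb x S \<in> S"
    and H: "symmetric_hyp n H" "complete_hyp n H" and hH: "h \<in> H"
    and p: "\<And>y. y \<in> {1..n} \<Longrightarrow> 0 \<le> p x y" "(\<Sum>y\<in>{1..n}. p x y) = 1"
  shows "cond_loss n p (L_abs n tb c) h x - (INF g\<in>H. cond_loss n p (L_abs n tb c) g x)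
         \<le> Gamma_mu n c \<mu> (cond_loss n p (L_mu n c \<mu>) h x - (INF g\<in>H. cond_loss n p (L_mu n c \<mu>) g x))"
proof -
  let ?A = "{1..n+1}" and ?W = "label_weight n p c x"
  have "Max (?W ` ?A) \<in> ?W ` ?A" by (intro Max_in) auto
  then obtain a where a: "Max (?W ` ?A) = ?W a" "a \<in> ?A" by (rule imageE)
  define b where "b = pred_label n tb h x"
  have b: "b \<in> ?A" "\<And>y. y \<in> ?A \<Longrightarrow> h x y \<le> h x b"
    unfolding b_def using pred_label_mem_max[where tb=tb and x=x and g=h, OF n tb] by auto
  have "cond_loss n p (L_abs n tb c) h x - (INF g\<in>H. cond_loss n p (L_abs n tb c) g x) = ?W a - ?W b"
    using cond_loss_L_abs_eq[where tb=tb and x=x and p=p and c=c and g=h, OF n tb p(2)]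
      INF_cond_loss_L_abs_eq[where tb=tb and x=x and p=p and c=c, OF n tb p(2) H] a(1)
    by (simp add: b_def)
  also have "\<dots> \<le> Gamma_mu n c \<mu> (cond_loss n p (L_mu n c \<mu>) h x - (INF g\<in>H. cond_loss n p (L_mu n c \<mu>) g x))"
  proof (rule weight_gap_le_Gamma_mu[where W="label_weight n p c x" and q="softmax n (h x)",
        OF a(2) b(1) softmax_pos sum_softmax _ _ _ sum_label_weight[where p=p and x=x, OF p(2)] c \<mu>])
    show "softmax n (h x) y \<le> softmax n (h x) b" if "y \<in> ?A" for y
      using b(2)[OF that] by (rule softmax_mono)
    show "0 \<le> ?W y" if "y \<in> ?A" for y
      using label_weight_nonneg[where p=p and x=x, OF p(1)] c that by simp
    show "?W y \<le> ?W a" if "y \<in> ?A" for y unfolding a(1)[symmetric] using that by (intro Max_ge) auto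
    fix q' :: "nat \<Rightarrow> real"
    assume "\<And>y. y \<in> ?A \<Longrightarrow> 0 < q' y" "(\<Sum>y\<in>?A. q' y) = 1"
    then show "(\<Sum>y\<in>?A. ?W y * gen_ln \<mu> (q' y)) - (\<Sum>y\<in>?A. ?W y * gen_ln \<mu> (softmax n (h x) y))
        \<le> cond_loss n p (L_mu n c \<mu>) h x - (INF g\<in>H. cond_loss n p (L_mu n c \<mu>) g x)"
      using INF_cond_loss_L_mu_le[where p=p and x=x and \<mu>=\<mu>, OF p c H]
        cond_loss_L_mu_eq[where p=p and x=x and g=h and c=c and \<mu>=\<mu>, OF p(2)] by force
  qed
  finally show ?thesis .
qed

section \<open>Measurability of the conditional infima\<close>

lemma tendsto_softmax:
  assumes "\<And>y. y \<in> {1..n+1} \<Longrightarrow> (\<lambda>k. v k y) \<longlonglongrightarrow> s y" "y \<in> {1..n+1}"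
  shows "(\<lambda>k. softmax n (v k) y) \<longlonglongrightarrow> softmax n s y"
  unfolding softmax_def using assms softmax_denominator_pos[where n=n and s=s]
  by (intro tendsto_intros) auto

text \<open>Indexing rational score vectors by the countable type \<open>rat list\<close> makes infima over
  them measurable.\<close>
definition rat_vec :: "rat list \<Rightarrow> nat \<Rightarrow> real" where
  "rat_vec r y = real_of_rat (r ! y)"

lemma rat_vec_approx:
  fixes s :: "nat \<Rightarrow> real"
  obtains r :: "nat \<Rightarrow> rat list" where "\<And>y. y < N \<Longrightarrow> (\<lambda>k. rat_vec (r k) y) \<longlonglongrightarrow> s y"
proof -
  have "\<forall>y. \<exists>X. (\<forall>k. X k \<in> \<rat>) \<and> X \<longlonglongrightarrow> s y"
    using closure_sequential[of _ \<rat>] Rats_closure_real by blast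
  then obtain X where X: "\<And>y k. X y k \<in> \<rat>" "\<And>y. X y \<longlonglongrightarrow> s y" by metis
  define r where "r k = map (\<lambda>y. inv real_of_rat (X y k)) [0..<N]" for k
  have r: "rat_vec (r k) y = X y k" if "y < N" for y k
    using X(1)[of y k] that by (simp add: r_def rat_vec_def Rats_def f_inv_into_f)
  show ?thesis by (rule that[of r]) (simp add: r X(2))
qed

lemma INF_eq_INF_rat_vec:
  fixes F :: "(nat \<Rightarrow> real) \<Rightarrow> real" and S :: "(nat \<Rightarrow> real) set"
  assumes nonneg: "\<And>s. 0 \<le> F s"
    and realizes: "\<And>s. \<exists>s'\<in>S. \<forall>y\<in>{1..N}. s' y = s y"
    and cong: "\<And>s s'. (\<And>y. y \<in> {1..N} \<Longrightarrow> s y = s' y) \<Longrightarrow> F s = F s'"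
    and cont: "\<And>v s. (\<And>y. y \<in> {1..N} \<Longrightarrow> (\<lambda>k. v k y) \<longlonglongrightarrow> s y) \<Longrightarrow> (\<lambda>k. F (v k)) \<longlonglongrightarrow> F s"
  shows "(INF s\<in>S. F s) = (INF r. F (rat_vec r))"
proof (rule antisym)
  show "(INF s\<in>S. F s) \<le> (INF r. F (rat_vec r))"
  proof (rule cINF_greatest)
    fix r
    obtain s where s: "s \<in> S" "\<forall>y\<in>{1..N}. s y = rat_vec r y" using realizes by blast
    have "(INF s\<in>S. F s) \<le> F s" using s(1) nonneg by (intro cINF_lower bdd_belowI2)
    also have "\<dots> = F (rat_vec r)" using s(2) by (intro cong) simp
    finally show "(INF s\<in>S. F s) \<le> F (rat_vec r)" .
  qed simp
  show "(INF r. F (rat_vec r)) \<le> (INF s\<in>S. F s)"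
  proof (rule cINF_greatest)
    show "S \<noteq> {}" using realizes by blast
    fix s assume "s \<in> S"
    obtain r where "\<And>y. y < N + 1 \<Longrightarrow> (\<lambda>k. rat_vec (r k) y) \<longlonglongrightarrow> s y"
      using rat_vec_approx[of "N + 1" s] by blast
    then have "(\<lambda>k. F (rat_vec (r k))) \<longlonglongrightarrow> F s" by (intro cont) simp
    moreover have "\<forall>k. (INF r. F (rat_vec r)) \<le> F (rat_vec (r k))"
      using nonneg by (intro allI cINF_lower bdd_belowI2) auto
    ultimately show "(INF r. F (rat_vec r)) \<le> F s"
      by (intro tendsto_lowerbound always_eventually) auto
  qed
qed

lemma INF_cond_loss_L_mu_eq_INF_rat_vec:
  assumes p: "\<And>y. y \<in> {1..n} \<Longrightarrow> 0 \<le> p x y" "(\<Sum>y\<in>{1..n}. p x y) = 1" and c: "c < 1"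
    and H: "symmetric_hyp n H" "complete_hyp n H"
  shows "(INF g\<in>H. cond_loss n p (L_mu n c \<mu>) g x)
    = (INF r. - (\<Sum>y\<in>{1..n+1}. label_weight n p c x y * gen_ln \<mu> (softmax n (rat_vec r) y)))"
proof -
  let ?A = "{1..n+1}"
  define F where "F s = - (\<Sum>y\<in>?A. label_weight n p c x y * gen_ln \<mu> (softmax n s y))" for s
  have "(INF g\<in>H. cond_loss n p (L_mu n c \<mu>) g x) = (INF s\<in>(\<lambda>g. g x) ` H. F s)"
    by (simp add: F_def cond_loss_L_mu_eq[where p=p and x=x, OF p(2)] image_image)
  also have "\<dots> = (INF r. F (rat_vec r))"
  proof (rule INF_eq_INF_rat_vec)
    show "0 \<le> F s" for s
    proof -
      have "(\<Sum>y\<in>?A. label_weight n p c x y * gen_ln \<mu> (softmax n s y)) \<le> 0"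
        using label_weight_nonneg[where p=p and x=x, OF p(1)] c
        by (intro weighted_gen_ln_softmax_nonpos) auto
      then show ?thesis unfolding F_def by linarith
    qed
    show "\<exists>s'\<in>(\<lambda>g. g x) ` H. \<forall>y\<in>?A. s' y = s y" for s
    proof -
      obtain g where "g \<in> H" "\<And>y. y \<in> ?A \<Longrightarrow> g x y = s y"
        using symmetric_complete_realizes[OF H, where x=x and s=s] by blast
      then show ?thesis by blast
    qed
    show "F s = F s'" if "\<And>y. y \<in> ?A \<Longrightarrow> s y = s' y" for s s'
      unfolding F_def using softmax_cong[of n s s'] that by simp
    show "(\<lambda>k. F (v k)) \<longlonglongrightarrow> F s" if "\<And>y. y \<in> ?A \<Longrightarrow> (\<lambda>k. v k y) \<longlonglongrightarrow> s y" for v s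
      unfolding F_def
      by (intro tendsto_minus tendsto_sum tendsto_mult tendsto_const
          isCont_tendsto_compose[OF isCont_gen_ln[OF softmax_pos]] tendsto_softmax that)
  qed
  finally show ?thesis by (simp add: F_def)
qed

lemma borel_measurable_label_weight [measurable]:
  assumes [measurable]: "(\<lambda>x. p x y) \<in> borel_measurable M"
  shows "(\<lambda>x. label_weight n p c x y) \<in> borel_measurable M"
  unfolding label_weight_def by measurable

lemma borel_measurable_cond_loss_L_mu:
  assumes [measurable]: "\<And>y. (\<lambda>x. g x y) \<in> borel_measurable M" "\<And>y. (\<lambda>x. p x y) \<in> borel_measurable M"
  shows "(\<lambda>x. cond_loss n p (L_mu n c \<mu>) g x) \<in> borel_measurable M"
  unfolding cond_loss_def L_mu_def ell_def Let_def by measurable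

lemma borel_measurable_INF_cond_loss_L_mu:
  assumes [measurable]: "\<And>y. (\<lambda>x. p x y) \<in> borel_measurable M"
    and p: "\<And>x y. y \<in> {1..n} \<Longrightarrow> 0 \<le> p x y" "\<And>x. (\<Sum>y\<in>{1..n}. p x y) = 1" and c: "c < 1"
    and H: "symmetric_hyp n H" "complete_hyp n H"
  shows "(\<lambda>x. INF g\<in>H. cond_loss n p (L_mu n c \<mu>) g x) \<in> borel_measurable M"
proof -
  have "(\<lambda>x. INF r. - (\<Sum>y\<in>{1..n+1}. label_weight n p c x y * gen_ln \<mu> (softmax n (rat_vec r) y)))
      \<in> borel_measurable M"
    by measurable
  moreover have "(INF g\<in>H. cond_loss n p (L_mu n c \<mu>) g x)
      = (INF r. - (\<Sum>y\<in>{1..n+1}. label_weight n p c x y * gen_ln \<mu> (softmax n (rat_vec r) y)))" for x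
    by (intro INF_cond_loss_L_mu_eq_INF_rat_vec p c H)
  ultimately show ?thesis by simp
qed

lemma borel_measurable_INF_cond_loss_L_abs:
  assumes [measurable]: "\<And>y. (\<lambda>x. p x y) \<in> borel_measurable M"
    and n: "1 \<le> n" and tb: "\<And>x S. S \<noteq> {} \<Longrightarrow> S \<subseteq> {1..n} \<Longrightarrow> tb x S \<in> S"
    and p: "\<And>x. (\<Sum>y\<in>{1..n}. p x y) = 1" and H: "symmetric_hyp n H" "complete_hyp n H"
  shows "(\<lambda>x. INF g\<in>H. cond_loss n p (L_abs n tb c) g x) \<in> borel_measurable M"
proof -
  have "(\<lambda>x. 1 - Max ((\<lambda>y. label_weight n p c x y) ` {1..n+1})) \<in> borel_measurable M"
    by (intro borel_measurable_diff borel_measurable_const borel_measurable_Max) auto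
  moreover have "(INF g\<in>H. cond_loss n p (L_abs n tb c) g x)
      = 1 - Max ((\<lambda>y. label_weight n p c x y) ` {1..n+1})" for x
    by (intro INF_cond_loss_L_abs_eq n tb p H)
  ultimately show ?thesis by simp
qed

lemma (in prob_space) integral_sqrt_le_sqrt_integral:
  fixes f :: "'a \<Rightarrow> real"
  assumes K: "0 \<le> K" and f: "integrable M f" "\<And>x. 0 \<le> f x"
  shows "integrable M (\<lambda>x. sqrt (K * f x))" and "(\<integral>x. sqrt (K * f x) \<partial>M) \<le> sqrt (K * (\<integral>x. f x \<partial>M))"
proof -
  define T where "T = (\<integral>x. f x \<partial>M)"
  have tangent: "sqrt (K * f x) \<le> K / (2 * l) * f x + l / 2" if "0 < l" for x l
    using arith_geo_mean_sqrt[of "K * f x / l" l] K f(2)[of x] that by (simp add: field_simps)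
  have [measurable]: "f \<in> borel_measurable M" using f(1) by simp
  show int: "integrable M (\<lambda>x. sqrt (K * f x))"
  proof (rule Bochner_Integration.integrable_bound)
    show "integrable M (\<lambda>x. K / 2 * f x + 1 / 2)" using f(1) by simp
    show "AE x in M. norm (sqrt (K * f x)) \<le> norm (K / 2 * f x + 1 / 2)"
    proof (rule AE_I2)
      fix x
      have "sqrt (K * f x) \<le> K / 2 * f x + 1 / 2" using tangent[of 1 x] by simp
      then show "norm (sqrt (K * f x)) \<le> norm (K / 2 * f x + 1 / 2)" using K f(2)[of x] by simp
    qed
  qed measurable
  have bound: "(\<integral>x. sqrt (K * f x) \<partial>M) \<le> K * T / (2 * l) + l / 2" if "0 < l" for l
  proof -
    have "(\<integral>x. sqrt (K * f x) \<partial>M) \<le> (\<integral>x. K / (2 * l) * f x + l / 2 \<partial>M)"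
      using int f(1) tangent[OF that] by (intro integral_mono) auto
    also have "\<dots> = K * T / (2 * l) + l / 2"
      using f(1) by (simp add: T_def prob_space)
    finally show ?thesis .
  qed
  show "(\<integral>x. sqrt (K * f x) \<partial>M) \<le> sqrt (K * (\<integral>x. f x \<partial>M))"
  proof (cases "K * T = 0")
    case True
    have "(\<integral>x. sqrt (K * f x) \<partial>M) \<le> 0"
    proof (rule field_le_epsilon)
      fix e :: real assume "0 < e"
      then show "(\<integral>x. sqrt (K * f x) \<partial>M) \<le> 0 + e" using bound[of "2 * e"] True by simp
    qed
    then show ?thesis using True unfolding T_def by (simp only: real_sqrt_zero)
  next
    case False
    moreover have "0 \<le> K * T" using K f(2) by (simp add: T_def)
    ultimately have "0 < K * T" by linarith
    then have "0 < sqrt (K * T)" by simp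
    moreover have "K * T / (2 * sqrt (K * T)) = sqrt (K * T) / 2"
      using \<open>0 < K * T\<close> real_div_sqrt[of "K * T"] by simp
    ultimately show ?thesis using bound[of "sqrt (K * T)"] by (simp add: T_def)
  qed
qed

lemma (in prob_space) jensen_Gamma_mu:
  fixes f :: "'a \<Rightarrow> real"
  assumes f: "integrable M f" "\<And>x. 0 \<le> f x" and c: "c < 1" and \<mu>: "0 \<le> \<mu>"
  shows "integrable M (\<lambda>x. Gamma_mu n c \<mu> (f x))"
    and "(\<integral>x. Gamma_mu n c \<mu> (f x) \<partial>M) \<le> Gamma_mu n c \<mu> (\<integral>x. f x \<partial>M)"
proof -
  consider K where "0 \<le> K" "\<And>t. Gamma_mu n c \<mu> t = sqrt (K * t)"
    | K where "\<And>t. Gamma_mu n c \<mu> t = K * t"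
  proof (cases "\<mu> < 2")
    case True
    then show ?thesis using c \<mu> that(1)[of "if \<mu> < 1 then (2 - c) * 2 powr \<mu> * (2 - \<mu>)
        else 2 * (2 - c) * (real n + 1) powr (\<mu> - 1)"]
      by (auto simp: Gamma_mu_def mult.assoc)
  qed (use that(2)[of "(\<mu> - 1) * (real n + 1) powr (\<mu> - 1)"] in \<open>simp add: Gamma_mu_def\<close>)
  then have "integrable M (\<lambda>x. Gamma_mu n c \<mu> (f x))
      \<and> (\<integral>x. Gamma_mu n c \<mu> (f x) \<partial>M) \<le> Gamma_mu n c \<mu> (\<integral>x. f x \<partial>M)"
    by cases (use integral_sqrt_le_sqrt_integral[OF _ f] f(1) in auto)
  then show "integrable M (\<lambda>x. Gamma_mu n c \<mu> (f x))"
    and "(\<integral>x. Gamma_mu n c \<mu> (f x) \<partial>M) \<le> Gamma_mu n c \<mu> (\<integral>x. f x \<partial>M)" by auto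
qed

lemma (in prob_space) exp_loss_ne_infinity:
  assumes "\<And>x. cond_loss n p L h x \<le> K"
  shows "exp_loss n M p L h \<noteq> \<infinity>"
proof -
  have "(\<integral>\<^sup>+x. ennreal (cond_loss n p L h x) \<partial>M) \<le> (\<integral>\<^sup>+x. ennreal K \<partial>M)"
    using assms by (intro nn_integral_mono ennreal_leI)
  also have "\<dots> < \<infinity>" by (simp add: emeasure_space_1)
  finally show ?thesis by (simp add: exp_loss_def)
qed

lemma excess_plus_min_gap_eq:
  assumes "h \<in> H" "exp_loss n M p L h \<noteq> \<infinity>"
  shows "exp_loss n M p L h - best_loss n M p L H + min_gap n M p L H
       = exp_loss n M p L h - enn2ereal (\<integral>\<^sup>+x. ennreal (INF g\<in>H. cond_loss n p L g x) \<partial>M)"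
proof -
  have "0 \<le> best_loss n M p L H" unfolding best_loss_def exp_loss_def by (rule INF_greatest) simp
  moreover have "best_loss n M p L H \<le> exp_loss n M p L h"
    unfolding best_loss_def by (rule INF_lower) fact
  ultimately obtain b where "best_loss n M p L H = ereal b"
    using assms(2) by (cases "best_loss n M p L H") auto
  moreover have "0 \<le> exp_loss n M p L h" by (simp add: exp_loss_def)
  ultimately show ?thesis using assms(2) unfolding min_gap_def
    by (cases "exp_loss n M p L h"; cases "enn2ereal (\<integral>\<^sup>+x. ennreal (INF g\<in>H. cond_loss n p L g x) \<partial>M)")
      auto
qed

text \<open>No measurability is required of \<open>fA\<close>: the abstention loss of a hypothesis depends
  on the tie-breaking rule, which need not be measurable in \<open>x\<close>.\<close>
lemma integral_excess_le:
  fixes fA gA fB gB :: "'a \<Rightarrow> real" and G :: "real \<Rightarrow> real"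
  assumes gA: "integrable M gA" "\<And>x. 0 \<le> gA x"
    and fB: "fB \<in> borel_measurable M" "(\<integral>\<^sup>+x. ennreal (fB x) \<partial>M) \<noteq> \<infinity>"
    and gB: "gB \<in> borel_measurable M" "\<And>x. 0 \<le> gB x" "\<And>x. gB x \<le> fB x"
    and G_nonneg: "\<And>t. 0 \<le> t \<Longrightarrow> 0 \<le> G t"
    and G_jensen: "\<And>f. integrable M f \<Longrightarrow> (\<And>x. 0 \<le> f x) \<Longrightarrow>
        integrable M (\<lambda>x. G (f x)) \<and> (\<integral>x. G (f x) \<partial>M) \<le> G (\<integral>x. f x \<partial>M)"
    and pointwise: "\<And>x. fA x - gA x \<le> G (fB x - gB x)"
  shows "enn2ereal (\<integral>\<^sup>+x. ennreal (fA x) \<partial>M) - enn2ereal (\<integral>\<^sup>+x. ennreal (gA x) \<partial>M)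
    \<le> ereal (G (real_of_ereal
          (enn2ereal (\<integral>\<^sup>+x. ennreal (fB x) \<partial>M) - enn2ereal (\<integral>\<^sup>+x. ennreal (gB x) \<partial>M))))"
proof -
  have fB0: "0 \<le> fB x" for x using gB(2,3) by (rule order_trans)
  have fB_int: "integrable M fB"
    using fB fB0 by (intro integrableI_nonneg) (auto simp: top.not_eq_extremum)
  have gB_int: "integrable M gB"
    using gB fB0 by (intro Bochner_Integration.integrable_bound[OF fB_int]) (auto intro!: AE_I2)
  define D where "D = (\<lambda>x. fB x - gB x)"
  have D: "integrable M D" "\<And>x. 0 \<le> D x" using fB_int gB_int gB(3) by (auto simp: D_def)
  then have GD_int: "integrable M (\<lambda>x. G (D x))" and jensen: "(\<integral>x. G (D x) \<partial>M) \<le> G (\<integral>x. D x \<partial>M)"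
    using G_jensen by blast+
  have "(\<integral>\<^sup>+x. ennreal (fA x) \<partial>M) \<le> (\<integral>\<^sup>+x. ennreal (gA x + G (D x)) \<partial>M)"
    using pointwise by (intro nn_integral_mono ennreal_leI) (auto simp: D_def algebra_simps)
  also have "\<dots> = ennreal ((\<integral>x. gA x \<partial>M) + (\<integral>x. G (D x) \<partial>M))"
    using gA GD_int G_nonneg D(2) by (subst nn_integral_eq_integral) (auto intro: add_nonneg_nonneg)
  finally have A: "enn2ereal (\<integral>\<^sup>+x. ennreal (fA x) \<partial>M) \<le> ereal ((\<integral>x. gA x \<partial>M) + (\<integral>x. G (D x) \<partial>M))"
    using gA(2) GD_int G_nonneg D(2)
    by (metis (no_types, lifting) enn2ereal_ennreal add_nonneg_nonneg integral_nonneg_AE AE_I2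
        less_eq_ennreal.rep_eq)
  have nn_eq: "enn2ereal (\<integral>\<^sup>+x. ennreal (h x) \<partial>M) = ereal (\<integral>x. h x \<partial>M)"
    if "integrable M h" "\<And>x. 0 \<le> h x" for h
    using that by (simp add: nn_integral_eq_integral integral_nonneg_AE)
  have "enn2ereal (\<integral>\<^sup>+x. ennreal (fA x) \<partial>M) - enn2ereal (\<integral>\<^sup>+x. ennreal (gA x) \<partial>M)
      \<le> ereal (\<integral>x. G (D x) \<partial>M)"
    unfolding nn_eq[OF gA] using A by (cases "enn2ereal (\<integral>\<^sup>+x. ennreal (fA x) \<partial>M)") auto
  also have "\<dots> \<le> ereal (G (\<integral>x. D x \<partial>M))" using jensen by simp
  also have "(\<integral>x. D x \<partial>M) = real_of_ereal
      (enn2ereal (\<integral>\<^sup>+x. ennreal (fB x) \<partial>M) - enn2ereal (\<integral>\<^sup>+x. ennreal (gB x) \<partial>M))"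
    unfolding nn_eq[OF fB_int fB0] nn_eq[OF gB_int gB(2)] D_def
    using fB_int gB_int by simp
  finally show ?thesis .
qed

lemma (in prob_space) excess_plus_min_gap_le:
  fixes LA LB :: "('a \<Rightarrow> nat \<Rightarrow> real) \<Rightarrow> 'a \<Rightarrow> nat \<Rightarrow> real"
    and p :: "'a \<Rightarrow> nat \<Rightarrow> real" and G :: "real \<Rightarrow> real"
  assumes hH: "h \<in> H"
    and A: "\<And>g x. 0 \<le> cond_loss n p LA g x" "\<And>g x. cond_loss n p LA g x \<le> 1"
      "(\<lambda>x. INF g\<in>H. cond_loss n p LA g x) \<in> borel_measurable M"
    and B: "\<And>g x. 0 \<le> cond_loss n p LB g x" "(\<lambda>x. cond_loss n p LB h x) \<in> borel_measurable M"
      "(\<lambda>x. INF g\<in>H. cond_loss n p LB g x) \<in> borel_measurable M" "exp_loss n M p LB h \<noteq> \<infinity>"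
    and G_nonneg: "\<And>t. 0 \<le> t \<Longrightarrow> 0 \<le> G t"
    and G_jensen: "\<And>f. integrable M f \<Longrightarrow> (\<And>x. 0 \<le> f x) \<Longrightarrow>
        integrable M (\<lambda>x. G (f x)) \<and> (\<integral>x. G (f x) \<partial>M) \<le> G (\<integral>x. f x \<partial>M)"
    and pointwise: "\<And>x. cond_loss n p LA h x - (INF g\<in>H. cond_loss n p LA g x)
        \<le> G (cond_loss n p LB h x - (INF g\<in>H. cond_loss n p LB g x))"
  shows "exp_loss n M p LA h - best_loss n M p LA H + min_gap n M p LA H
    \<le> ereal (G (real_of_ereal (exp_loss n M p LB h - best_loss n M p LB H + min_gap n M p LB H)))"
proof -
  have INF_bounds:
      "0 \<le> (INF g\<in>H. cond_loss n p L g x)" "(INF g\<in>H. cond_loss n p L g x) \<le> cond_loss n p L h x"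
    if "\<And>g. 0 \<le> cond_loss n p L g x" for L x
    using hH that by (auto intro!: cINF_greatest cINF_lower bdd_belowI2[where m=0])
  have "(INF g\<in>H. cond_loss n p LA g x) \<le> 1" for x
    using INF_bounds(2)[OF A(1), of x] A(2)[of h x] by linarith
  then have A_int: "integrable M (\<lambda>x. INF g\<in>H. cond_loss n p LA g x)"
    using INF_bounds(1)[OF A(1)] A(3) by (intro integrable_const_bound[where B=1]) auto
  show ?thesis
    unfolding excess_plus_min_gap_eq[OF hH B(4)]
      excess_plus_min_gap_eq[OF hH exp_loss_ne_infinity[OF A(2)]]
    unfolding exp_loss_def
    by (rule integral_excess_le)
      (use A_int B[unfolded exp_loss_def] INF_bounds A(1) B(1) G_nonneg G_jensen pointwise in auto)
qed

theorem theorem1: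
  fixes n :: nat and c \<mu> :: real
    and H :: "('x \<Rightarrow> nat \<Rightarrow> real) set" and h :: "'x \<Rightarrow> nat \<Rightarrow> real"
    and Mx :: "'x measure" and p :: "'x \<Rightarrow> nat \<Rightarrow> real"
    and tb :: "'x \<Rightarrow> nat set \<Rightarrow> nat"
  assumes n2: "n \<ge> 2"
    and c: "0 < c" "c < 1"
    and mu: "\<mu> \<ge> 0"
    and tb: "\<And>x S. S \<noteq> {} \<Longrightarrow> S \<subseteq> {1..n} \<Longrightarrow> tb x S \<in> S"
    and sym: "symmetric_hyp n H"
    and compl: "complete_hyp n H"
    and meas_H: "\<And>g y. g \<in> H \<Longrightarrow> (\<lambda>x. g x y) \<in> borel_measurable Mx"
    and D: "prob_space Mx"
    and meas_p: "\<And>y. (\<lambda>x. p x y) \<in> borel_measurable Mx"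
    and p_nonneg: "\<And>x y. y \<in> {1..n} \<Longrightarrow> p x y \<ge> 0"
    and p_sum: "\<And>x. (\<Sum>y\<in>{1..n}. p x y) = 1"
    and hH: "h \<in> H"
    and fin: "exp_loss n Mx p (L_mu n c \<mu>) h \<noteq> \<infinity>"
  shows "exp_loss n Mx p (L_abs n tb c) h - best_loss n Mx p (L_abs n tb c) H
           + min_gap n Mx p (L_abs n tb c) H
         \<le> ereal (Gamma_mu n c \<mu> (real_of_ereal
              (exp_loss n Mx p (L_mu n c \<mu>) h - best_loss n Mx p (L_mu n c \<mu>) H
                 + min_gap n Mx p (L_mu n c \<mu>) H)))"
proof -
  interpret prob_space Mx by (rule D)
  have n: "1 \<le> n" using n2 by simp
  show ?thesis
  proof (rule excess_plus_min_gap_le[OF hH])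
    show "0 \<le> cond_loss n p (L_abs n tb c) g x" "cond_loss n p (L_abs n tb c) g x \<le> 1" for g x
      using cond_loss_L_abs_bounds[where x=x and tb=tb and p=p and g=g, OF n tb p_nonneg p_sum] c
      by auto
    show "0 \<le> cond_loss n p (L_mu n c \<mu>) g x" for g x
      using cond_loss_L_mu_nonneg[where x=x and p=p, OF p_nonneg c(2)] .
    show "(\<lambda>x. cond_loss n p (L_mu n c \<mu>) h x) \<in> borel_measurable Mx"
      using meas_H[OF hH] meas_p by (rule borel_measurable_cond_loss_L_mu)
    show "(\<lambda>x. INF g\<in>H. cond_loss n p (L_abs n tb c) g x) \<in> borel_measurable Mx"
      using meas_p n tb p_sum sym compl by (rule borel_measurable_INF_cond_loss_L_abs)
    show "(\<lambda>x. INF g\<in>H. cond_loss n p (L_mu n c \<mu>) g x) \<in> borel_measurable Mx"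
      using meas_p p_nonneg p_sum c(2) sym compl by (rule borel_measurable_INF_cond_loss_L_mu)
    show "0 \<le> Gamma_mu n c \<mu> t" if "0 \<le> t" for t using that c(2) mu by (rule Gamma_mu_nonneg)
    show "integrable Mx (\<lambda>x. Gamma_mu n c \<mu> (f x)) \<and>
        (\<integral>x. Gamma_mu n c \<mu> (f x) \<partial>Mx) \<le> Gamma_mu n c \<mu> (\<integral>x. f x \<partial>Mx)"
      if "integrable Mx f" "\<And>x. 0 \<le> f x" for f
      using jensen_Gamma_mu[OF that c(2) mu] by blast
    show "cond_loss n p (L_abs n tb c) h x - (INF g\<in>H. cond_loss n p (L_abs n tb c) g x)
        \<le> Gamma_mu n c \<mu> (cond_loss n p (L_mu n c \<mu>) h x - (INF g\<in>H. cond_loss n p (L_mu n c \<mu>) g x))"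
      for x using n c(2) mu tb sym compl hH p_nonneg p_sum by (rule cond_regret_L_abs_le_Gamma_mu)
  qed (fact fin)
qed

end
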